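(* Let $N \geq 5$ be an integer. For an integer $M$ with $0 \leq M \leq \binom{N}{2}$, the pair $(N,M)$ is non-feasible for the family of all line graphs if and only if $M$ belongs to one of the intervals \[\left[ \binom{N-t}{2} +\binom{t+2}{2}, \ \binom{N-t+1}{2}-1 \right] \quad \text{for some integer } t \text{ with } 1 \leq t < \frac{ -5 + \sqrt{8N +17}}{2}.\] (Thus the largest such $t$ is $\left\lfloor \frac{ -5 + \sqrt{8N +17}}{2} \right\rfloor$ if $\frac{ -5 + \sqrt{8N +17}}{2}$ is not an integer, and $\frac{ -5 + \sqrt{8N +17}}{2}-1$ if it is an integer.)
   Context: All graphs are finite and simple. For a graph $G$, $L(G)$ denotes its line graph. For integers $N\ge 1$ and $0 \le M \le \binom{N}{2}$, the pair $(N,M)$ is called feasible (for the family of all line graphs) if there exists a graph $G$ such that $L(G)$ has exactly $N$ vertices and exactly $M$ edges; otherwise $(N,M)$ is non-feasible. For integers $a \le b$, $[a,b]$ denotes the set of integers $p$ with $a \le p \le b$. *)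

theory Defs
  imports Complex_Main
begin

text \<open>A finite simple graph G is represented by its edge set: a finite set of
  2-element vertex sets (vertices are natural numbers; isolated vertices of G are
  irrelevant for the line graph).\<close>

definition simple_edge_set :: "nat set set \<Rightarrow> bool" where
  "simple_edge_set E \<longleftrightarrow> finite E \<and> (\<forall>e\<in>E. card e = 2)"

definition line_graph_edges :: "nat set set \<Rightarrow> nat set set set" where
  "line_graph_edges E = {{e, f} | e f. e \<in> E \<and> f \<in> E \<and> e \<noteq> f \<and> e \<inter> f \<noteq> {}}"

definition feasible_line :: "nat \<Rightarrow> nat \<Rightarrow> bool" where
  "feasible_line N M \<longleftrightarrow>
     (\<exists>E. simple_edge_set E \<and> card E = N \<and> card (line_graph_edges E) = M)"

end

theory Submission
  imports Defs
begin

text \<open>The line graph of G has \<Sum>v. binom(d(v), 2) edges. If G has N edges and maximum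
  degree D, this gives binom(D, 2) \<le> M and M \<le> N(D - 1), and splitting off the star at a
  vertex of maximum degree gives M \<le> binom(D, 2) + binom(N - D, 2) + 2(N - D). For M in the
  t-th interval these bounds exclude D > N - t, D \<le> t + 1 and t + 2 \<le> D \<le> N - t
  respectively: the last bound is convex in D and at both ends of that range equals the left
  end of the interval minus one.
  Conversely, write M greedily as binom(a, 2) + binom(j + 1, 2) + q with q \<le> j. Then M is
  realised by a star with a leaves, a star with j leaves centred at one of these leaves and
  sharing q of its leaves with the first star, and N - a - j isolated edges. The greedy choice
  only fails for M in one of the intervals.\<close>

definition degree :: "nat set set \<Rightarrow> nat \<Rightarrow> nat" where
  "degree E x = card {e\<in>E. x \<in> e}"

definition star :: "nat \<Rightarrow> nat set \<Rightarrow> nat set set" where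
  "star v L = (\<lambda>w. {v, w}) ` L"

lemma Suc_choose_two: "Suc n choose 2 = (n choose 2) + n"
  by (simp add: numeral_2_eq_2)

lemma two_mult_choose_two: "2 * (n choose 2) = n * (n - 1)"
proof (induction n)
  case (Suc n)
  then show ?case
    by (cases n) (simp_all add: Suc_choose_two algebra_simps)
qed simp

lemma two_mult_choose_two_int: "2 * int (n choose 2) = int n * (int n - 1)"
proof -
  have "2 * int (n choose 2) = int (n * (n - 1))"
    by (metis two_mult_choose_two of_nat_mult of_nat_numeral)
  then show ?thesis
    by (cases n) (auto simp: algebra_simps)
qed

lemma simple_edge_set_finite_Union: "simple_edge_set E \<Longrightarrow> finite (\<Union>E)"
  unfolding simple_edge_set_def by (metis card.infinite finite_Union zero_neq_numeral)

lemma degree_le_card: "finite E \<Longrightarrow> degree E x \<le> card E"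
  unfolding degree_def by (intro card_mono) auto

lemma sum_degree_eq_sum_card_Int:
  assumes "finite V" "finite E"
  shows "(\<Sum>x\<in>V. degree E x) = (\<Sum>e\<in>E. card (e \<inter> V))"
proof -
  have "degree E x = (\<Sum>e\<in>E. if x \<in> e then 1 else 0)" for x
    unfolding degree_def using sum.inter_filter[OF assms(2), of "\<lambda>_. 1::nat"] by simp
  moreover have "card (e \<inter> V) = (\<Sum>x\<in>V. if x \<in> e then 1 else 0)" for e
    using sum.inter_filter[OF assms(1), of "\<lambda>_. 1::nat"] by (simp add: Int_commute Int_def)
  ultimately show ?thesis
    by (simp add: sum.swap[of _ V])
qed

lemma handshake:
  assumes "simple_edge_set E"
  shows "(\<Sum>x\<in>\<Union>E. degree E x) = 2 * card E"
proof -
  have "(\<Sum>x\<in>\<Union>E. degree E x) = (\<Sum>e\<in>E. card (e \<inter> \<Union>E))"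
    using assms simple_edge_set_finite_Union unfolding simple_edge_set_def
    by (intro sum_degree_eq_sum_card_Int) auto
  also have "\<dots> = (\<Sum>e\<in>E. 2)"
    using assms unfolding simple_edge_set_def
    by (intro sum.cong) (simp_all add: Int_absorb2 Union_upper)
  finally show ?thesis
    by simp
qed

lemma doubleton_eq_if_card_two:
  assumes "card e = 2" "x \<in> e" "y \<in> e" "x \<noteq> y"
  shows "e = {x, y}"
  using assms by (auto simp: card_2_iff)

lemma line_graph_edges_eq_UN:
  assumes "\<Union>E \<subseteq> V"
  shows "line_graph_edges E = (\<Union>x\<in>V. {P. P \<subseteq> {e\<in>E. x \<in> e} \<and> card P = 2})"
proof
  show "line_graph_edges E \<subseteq> (\<Union>x\<in>V. {P. P \<subseteq> {e\<in>E. x \<in> e} \<and> card P = 2})"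
  proof
    fix P
    assume "P \<in> line_graph_edges E"
    then obtain e f x where "P = {e, f}" "e \<in> E" "f \<in> E" "e \<noteq> f" "x \<in> e" "x \<in> f"
      unfolding line_graph_edges_def by blast
    then show "P \<in> (\<Union>x\<in>V. {P. P \<subseteq> {e\<in>E. x \<in> e} \<and> card P = 2})"
      using assms by (intro UN_I[of x]) auto
  qed
  show "(\<Union>x\<in>V. {P. P \<subseteq> {e\<in>E. x \<in> e} \<and> card P = 2}) \<subseteq> line_graph_edges E"
  proof
    fix P
    assume "P \<in> (\<Union>x\<in>V. {P. P \<subseteq> {e\<in>E. x \<in> e} \<and> card P = 2})"
    then obtain x e f where "P \<subseteq> {e\<in>E. x \<in> e}" "P = {e, f}" "e \<noteq> f"
      by (auto simp: card_2_iff)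
    then show "P \<in> line_graph_edges E"
      unfolding line_graph_edges_def by blast
  qed
qed

lemma card_line_graph_edges_eq_sum_degree:
  assumes "simple_edge_set E" "finite V" "\<Union>E \<subseteq> V"
  shows "card (line_graph_edges E) = (\<Sum>x\<in>V. degree E x choose 2)"
proof -
  have "{P. P \<subseteq> {e\<in>E. x \<in> e} \<and> card P = 2} \<inter>
      {P. P \<subseteq> {e\<in>E. y \<in> e} \<and> card P = 2} = {}"
    if "x \<noteq> y" for x y
  proof -
    have "e = f" if "e \<in> E" "f \<in> E" "x \<in> e" "y \<in> e" "x \<in> f" "y \<in> f" for e f
      using that \<open>x \<noteq> y\<close> assms(1) doubleton_eq_if_card_two
      unfolding simple_edge_set_def by metis
    then show ?thesis
      by (auto simp: card_2_iff)
  qed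
  then have "card (line_graph_edges E) = (\<Sum>x\<in>V. card {P. P \<subseteq> {e\<in>E. x \<in> e} \<and> card P = 2})"
    unfolding line_graph_edges_eq_UN[OF assms(3)] using assms(1,2)
    by (intro card_UN_disjoint) (auto simp: simple_edge_set_def)
  also have "\<dots> = (\<Sum>x\<in>V. degree E x choose 2)"
    using assms(1) unfolding degree_def simple_edge_set_def by (intro sum.cong) (auto intro: n_subsets)
  finally show ?thesis .
qed

lemma card_star: "v \<notin> L \<Longrightarrow> card (star v L) = card L"
  unfolding star_def by (intro card_image) (auto simp: inj_on_def doubleton_eq_iff)

lemma simple_edge_set_star_Un:
  "simple_edge_set H \<Longrightarrow> finite L \<Longrightarrow> v \<notin> L \<Longrightarrow> simple_edge_set (star v L \<union> H)"
  unfolding simple_edge_set_def star_def by (auto simp: card_2_iff)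

lemma degree_star_Un:
  assumes "finite H" "v \<notin> L" "v \<notin> \<Union>H"
  shows "degree (star v L \<union> H) x =
    (if x = v then card L else degree H x + (if x \<in> L then 1 else 0))"
proof (cases "x = v")
  case True
  then have "{e \<in> star v L \<union> H. x \<in> e} = star v L"
    using assms(3) unfolding star_def by auto
  then show ?thesis
    using True card_star[OF assms(2)] by (simp add: degree_def)
next
  case False
  then have "{e \<in> star v L \<union> H. x \<in> e} = (if x \<in> L then {{v, x}} else {}) \<union> {e \<in> H. x \<in> e}"
    unfolding star_def by auto
  moreover have "{v, x} \<notin> H"
    using assms(3) by auto
  ultimately show ?thesis
    using False assms(1) by (simp add: degree_def)
qed

lemma card_line_graph_edges_star_Un:
  assumes "simple_edge_set H" "finite L" "v \<notin> L" "v \<notin> \<Union>H"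
  shows "card (line_graph_edges (star v L \<union> H)) =
    (card L choose 2) + card (line_graph_edges H) + (\<Sum>e\<in>H. card (e \<inter> L))"
proof -
  define V where "V = L \<union> \<Union>H"
  have V: "finite V" "v \<notin> V" "\<Union>H \<subseteq> V"
    using assms simple_edge_set_finite_Union unfolding V_def by auto
  have "finite H"
    using assms(1) by (simp add: simple_edge_set_def)
  have "\<Union>(star v L \<union> H) \<subseteq> insert v V"
    unfolding V_def star_def by auto
  then have "card (line_graph_edges (star v L \<union> H)) =
      (\<Sum>x\<in>insert v V. degree (star v L \<union> H) x choose 2)"
    using V assms by (intro card_line_graph_edges_eq_sum_degree simple_edge_set_star_Un) auto
  also have "\<dots> = (card L choose 2) + (\<Sum>x\<in>V. degree (star v L \<union> H) x choose 2)"
    using V \<open>finite H\<close> assms(3,4) by (simp add: degree_star_Un)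
  also have "(\<Sum>x\<in>V. degree (star v L \<union> H) x choose 2) =
      (\<Sum>x\<in>V. (degree H x choose 2) + (if x \<in> L then degree H x else 0))"
    using V \<open>finite H\<close> assms(3,4) by (intro sum.cong) (auto simp: degree_star_Un Suc_choose_two)
  also have "\<dots> = (\<Sum>x\<in>V. degree H x choose 2) + (\<Sum>x\<in>L. degree H x)"
    using V(1) by (simp add: sum.distrib sum.If_cases V_def Int_absorb1)
  also have "(\<Sum>x\<in>V. degree H x choose 2) = card (line_graph_edges H)"
    using V assms(1) by (simp add: card_line_graph_edges_eq_sum_degree)
  also have "(\<Sum>x\<in>L. degree H x) = (\<Sum>e\<in>H. card (e \<inter> L))"
    using assms(2) \<open>finite H\<close> by (rule sum_degree_eq_sum_card_Int)
  finally show ?thesis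
    by (simp add: add.assoc)
qed

lemma line_graph_edges_insert_disjoint:
  assumes "e \<inter> \<Union>E = {}"
  shows "line_graph_edges (insert e E) = line_graph_edges E"
  using assms unfolding line_graph_edges_def by blast

lemma feasible_line_Suc:
  assumes "feasible_line N M"
  shows "feasible_line (Suc N) M"
proof -
  obtain E where E: "simple_edge_set E" "card E = N" "card (line_graph_edges E) = M"
    using assms unfolding feasible_line_def by blast
  define x where "x = Suc (Max (insert 0 (\<Union>E)))"
  have "y < x" if "y \<in> \<Union>E" for y
    using that simple_edge_set_finite_Union[OF E(1)] unfolding x_def by (simp add: le_imp_less_Suc)
  then have fresh: "{x, Suc x} \<inter> \<Union>E = {}"
    by force
  then have "{x, Suc x} \<notin> E"
    by auto
  then have "simple_edge_set (insert {x, Suc x} E)" "card (insert {x, Suc x} E) = Suc N"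
    using E(1,2) unfolding simple_edge_set_def by auto
  moreover have "card (line_graph_edges (insert {x, Suc x} E)) = M"
    using E(3) line_graph_edges_insert_disjoint[OF fresh] by simp
  ultimately show ?thesis
    unfolding feasible_line_def by blast
qed

lemma feasible_line_mono:
  assumes "feasible_line N M" "N \<le> N'"
  shows "feasible_line N' M"
  using assms(2) by (induction N' rule: dec_induct) (simp_all add: assms(1) feasible_line_Suc)

lemma feasible_line_two_stars:
  assumes "q \<le> j" "q < a"
  shows "feasible_line (a + j) ((a choose 2) + (Suc j choose 2) + q)"
proof -
  define L where "L = {1..a}"
  define Y where "Y = {2..<q + 2} \<union> {a + 2..<a + 2 + (j - q)}"
  have L: "finite L" "card L = a" "0 \<notin> L" "1 \<in> L"
    using assms unfolding L_def by auto
  have Y: "finite Y" "card Y = j" "0 \<notin> Y" "1 \<notin> Y" "card (Y \<inter> L) = q"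
  proof -
    have "Y \<inter> L = {2..<q + 2}"
      using assms unfolding Y_def L_def by auto
    moreover have "card Y = q + (j - q)"
      using assms unfolding Y_def by (subst card_Un_disjoint) auto
    ultimately show "finite Y" "card Y = j" "0 \<notin> Y" "1 \<notin> Y" "card (Y \<inter> L) = q"
      using assms unfolding Y_def by auto
  qed
  have H: "simple_edge_set (star 1 Y)" "0 \<notin> \<Union>(star 1 Y)"
    using Y simple_edge_set_star_Un[of "{}" Y 1] unfolding simple_edge_set_def star_def by auto
  have "card (line_graph_edges (star 1 Y)) = j choose 2"
    using card_line_graph_edges_star_Un[of "{}" Y 1] Y
    by (simp add: line_graph_edges_def simple_edge_set_def)
  moreover have "(\<Sum>e\<in>star 1 Y. card (e \<inter> L)) = j + q"
  proof -
    have "(\<Sum>e\<in>star 1 Y. card (e \<inter> L)) = (\<Sum>y\<in>Y. card ({1, y} \<inter> L))"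
      unfolding star_def using Y by (subst sum.reindex) (auto simp: inj_on_def doubleton_eq_iff)
    also have "\<dots> = (\<Sum>y\<in>Y. 1 + (if y \<in> L then 1 else 0))"
      using L Y by (intro sum.cong) (auto simp: card_insert_if)
    also have "\<dots> = card Y + card (Y \<inter> L)"
      using Y(1) by (simp only: sum.distrib card_eq_sum sum.inter_restrict)
    also have "\<dots> = j + q"
      using Y by simp
    finally show ?thesis .
  qed
  ultimately have "card (line_graph_edges (star 0 L \<union> star 1 Y)) =
      (a choose 2) + (Suc j choose 2) + q"
    using card_line_graph_edges_star_Un[OF H(1) L(1) L(3) H(2)] L by (simp add: Suc_choose_two)
  moreover have "card (star 0 L \<union> star 1 Y) = a + j"
    using L Y H(2) card_star[of 0 L] card_star[of 1 Y]
    by (subst card_Un_disjoint) (auto simp: star_def)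
  moreover have "simple_edge_set (star 0 L \<union> star 1 Y)"
    using simple_edge_set_star_Un[OF H(1) L(1) L(3)] .
  ultimately show ?thesis
    unfolding feasible_line_def by blast
qed

lemma feasible_line_choose_two_add:
  assumes "r < a" "r < Suc (Suc s) choose 2"
  shows "feasible_line (a + s) ((a choose 2) + r)"
proof -
  obtain j where j: "j \<le> s" "Suc j choose 2 \<le> r"
    and greatest: "\<And>i. i \<le> s \<Longrightarrow> Suc i choose 2 \<le> r \<Longrightarrow> i \<le> j"
    using Nat.ex_has_greatest_nat[of "\<lambda>i. i \<le> s \<and> Suc i choose 2 \<le> r" 0 s]
    by (auto simp: binomial_eq_0)
  have "r < Suc (Suc j) choose 2"
  proof (cases "j < s")
    case True
    then show ?thesis
      using greatest[of "Suc j"] by fastforce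
  next
    case False
    then show ?thesis
      using j(1) assms(2) by simp
  qed
  define q where "q = r - (Suc j choose 2)"
  have "q \<le> j" "q < a" "r = (Suc j choose 2) + q"
    using j(2) \<open>r < Suc (Suc j) choose 2\<close> assms(1) Suc_choose_two[of "Suc j"]
    unfolding q_def by auto
  then have "feasible_line (a + j) ((a choose 2) + r)"
    using feasible_line_two_stars[of q j a] by (simp add: add.assoc)
  then show ?thesis
    by (rule feasible_line_mono) (simp add: j(1))
qed

lemma feasible_line_or_gap:
  assumes "1 \<le> N" "M \<le> N choose 2"
  shows "feasible_line N M \<or> (\<exists>t. 1 \<le> t \<and> t * t + 5 * t + 2 < 2 * N \<and>
    (N - t choose 2) + (t + 2 choose 2) \<le> M \<and> M < (N - t + 1 choose 2))"
proof -
  obtain a where a: "a \<le> N" "a choose 2 \<le> M"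
    and greatest: "\<And>b. b \<le> N \<Longrightarrow> b choose 2 \<le> M \<Longrightarrow> b \<le> a"
    using Nat.ex_has_greatest_nat[of "\<lambda>b. b \<le> N \<and> b choose 2 \<le> M" 0 N]
    by (auto simp: binomial_eq_0)
  define s r where "s = N - a" and "r = M - (a choose 2)"
  have N: "N = a + s" and M: "M = (a choose 2) + r"
    using a unfolding s_def r_def by auto
  have r_0: "r = 0" if "s = 0"
    using that assms(2) N M by simp
  have M_less: "M < Suc a choose 2" if "s \<noteq> 0"
    using that N greatest[of "Suc a"] by fastforce
  have "r < a"
    using r_0 M_less M Suc_choose_two[of a] greatest[of 1] assms(1) by fastforce
  show ?thesis
  proof (cases "r < Suc (Suc s) choose 2")
    case True
    then show ?thesis
      using feasible_line_choose_two_add[OF \<open>r < a\<close> True] N M by simp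
  next
    case False
    moreover have "2 * (Suc (Suc s) choose 2) = s * s + 3 * s + 2"
      using two_mult_choose_two[of "Suc (Suc s)"] by (simp add: algebra_simps)
    ultimately have "s * s + 5 * s + 2 < 2 * N"
      using \<open>r < a\<close> N by linarith
    moreover have "s \<noteq> 0"
      using False r_0 by (auto simp: numeral_2_eq_2)
    ultimately show ?thesis
      using False N M M_less by (intro disjI2 exI[of _ s]) simp
  qed
qed

lemma card_line_graph_edges_le_choose_two:
  assumes "finite E"
  shows "card (line_graph_edges E) \<le> card E choose 2"
proof -
  have "line_graph_edges E \<subseteq> {P. P \<subseteq> E \<and> card P = 2}"
    unfolding line_graph_edges_def by (auto simp: card_2_iff)
  then have "card (line_graph_edges E) \<le> card {P. P \<subseteq> E \<and> card P = 2}"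
    using assms by (intro card_mono) auto
  then show ?thesis
    using n_subsets[OF assms] by simp
qed

lemma degree_choose_two_le_card_line_graph_edges:
  assumes "simple_edge_set E"
  shows "degree E v choose 2 \<le> card (line_graph_edges E)"
proof -
  have "finite (insert v (\<Union>E))"
    using simple_edge_set_finite_Union[OF assms] by simp
  then have "degree E v choose 2 \<le> (\<Sum>x\<in>insert v (\<Union>E). degree E x choose 2)"
    by (intro member_le_sum) auto
  also have "\<dots> = card (line_graph_edges E)"
    using assms \<open>finite (insert v (\<Union>E))\<close>
    by (intro card_line_graph_edges_eq_sum_degree[symmetric]) auto
  finally show ?thesis .
qed

lemma star_neighbours_Un:
  assumes "simple_edge_set E"
  shows "E = star v {w. {v, w} \<in> E} \<union> {e\<in>E. v \<notin> e}"
proof -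
  have "e \<in> star v {w. {v, w} \<in> E}" if "e \<in> E" "v \<in> e" for e
  proof -
    have "card e = 2"
      using that assms unfolding simple_edge_set_def by blast
    then obtain a b where "e = {a, b}"
      by (auto simp: card_2_iff)
    then have "e = {v, if a = v then b else a}"
      using that(2) by auto
    then show ?thesis
      using that(1) unfolding star_def by (intro image_eqI) auto
  qed
  then show ?thesis
    unfolding star_def by auto
qed

lemma card_line_graph_edges_le_star_bound:
  assumes "simple_edge_set E"
  shows "card (line_graph_edges E) \<le>
    (degree E v choose 2) + (card E - degree E v choose 2) + 2 * (card E - degree E v)"
proof -
  define L where "L = {w. {v, w} \<in> E}"
  define H where "H = {e\<in>E. v \<notin> e}"
  have E: "E = star v L \<union> H"
    unfolding L_def H_def by (rule star_neighbours_Un[OF assms])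
  have H: "simple_edge_set H" "v \<notin> \<Union>H"
    using assms unfolding H_def simple_edge_set_def by auto
  have L: "finite L" "v \<notin> L"
    using assms simple_edge_set_finite_Union[OF assms] unfolding L_def simple_edge_set_def
    by (auto intro: finite_subset)
  have "finite H" "finite (star v L)" "star v L \<inter> H = {}"
    using H L(1) unfolding simple_edge_set_def star_def by auto
  then have card_H: "card H = card E - card L"
    using E card_Un_disjoint[of "star v L" H] card_star[OF L(2)] by simp
  have degree_v: "degree E v = card L"
    using E \<open>finite H\<close> H(2) L(2) degree_star_Un[of H v L v] by simp
  have "card (e \<inter> L) \<le> 2" if "e \<in> H" for e
    using H(1) that card_mono[OF _ Int_lower1, of e L] unfolding simple_edge_set_def
    by (metis card.infinite zero_neq_numeral)
  then have "(\<Sum>e\<in>H. card (e \<inter> L)) \<le> card H * 2"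
    using sum_bounded_above[of H "\<lambda>e. card (e \<inter> L)" 2] by simp
  moreover have "card (line_graph_edges H) \<le> card H choose 2"
    using \<open>finite H\<close> by (rule card_line_graph_edges_le_choose_two)
  ultimately show ?thesis
    using card_line_graph_edges_star_Un[OF H(1) L H(2)] E card_H degree_v by simp
qed

lemma card_line_graph_edges_le_max_degree:
  assumes "simple_edge_set E" "\<And>x. degree E x \<le> D"
  shows "card (line_graph_edges E) \<le> card E * (D - 1)"
proof -
  have "2 * card (line_graph_edges E) = (\<Sum>x\<in>\<Union>E. 2 * (degree E x choose 2))"
    using assms(1) simple_edge_set_finite_Union[OF assms(1)]
    by (simp add: card_line_graph_edges_eq_sum_degree sum_distrib_left)
  also have "\<dots> \<le> (\<Sum>x\<in>\<Union>E. degree E x * (D - 1))"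
    using assms(2) by (intro sum_mono) (simp add: two_mult_choose_two diff_le_mono)
  also have "\<dots> = 2 * card E * (D - 1)"
    using handshake[OF assms(1)] by (simp add: sum_distrib_right[symmetric])
  finally show ?thesis
    by simp
qed

lemma ex_max_degree:
  assumes "finite E"
  obtains v where "\<And>x. degree E x \<le> degree E v"
proof -
  have "\<exists>v. \<forall>x. degree E x \<le> degree E v"
    using Lattices_Big.ex_has_greatest_nat[of "\<lambda>_. True" 0 "degree E" "Suc (card E)"]
      degree_le_card[OF assms] by (simp add: le_imp_less_Suc)
  then show ?thesis
    using that by blast
qed

lemma star_bound_less_gap_start:
  fixes N t D :: nat
  assumes "t + 2 \<le> D" "D \<le> N - t"
  shows "(D choose 2) + (N - D choose 2) + 2 * (N - D) < (N - t choose 2) + (t + 2 choose 2)"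
proof -
  have "t \<le> N" "D \<le> N"
    using assms by auto
  have "0 \<le> (int N - int t - int D) * (int D - int t - 2)"
    using assms by (intro mult_nonneg_nonneg) auto
  moreover have "2 * int ((N - t choose 2) + (t + 2 choose 2)) =
      2 * int ((D choose 2) + (N - D choose 2) + 2 * (N - D))
      + 2 * ((int N - int t - int D) * (int D - int t - 2)) + 2"
    using \<open>t \<le> N\<close> \<open>D \<le> N\<close> by (simp add: two_mult_choose_two_int of_nat_diff algebra_simps)
  ultimately have "2 * int ((D choose 2) + (N - D choose 2) + 2 * (N - D))
      < 2 * int ((N - t choose 2) + (t + 2 choose 2))"
    by linarith
  then show ?thesis
    by (simp only: mult_less_cancel_left_pos[of 2] of_nat_less_iff)
qed

lemma times_less_gap_start:
  fixes N t :: nat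
  assumes "1 \<le> t" "t * t + 5 * t + 2 < 2 * N"
  shows "N * t < (N - t choose 2) + (t + 2 choose 2)"
proof -
  have "4 * t + 1 \<le> N"
  proof (cases "t \<le> 2")
    case True
    then have "t = 1 \<or> t = 2"
      using assms(1) by auto
    then show ?thesis
      using assms(2) by auto
  next
    case False
    then have "3 * t \<le> t * t"
      by simp
    then show ?thesis
      using assms by linarith
  qed
  then have "0 \<le> int N * (int N - 4 * int t - 1)"
    by simp
  moreover have "0 < (int t + 1)\<^sup>2"
    by simp
  moreover have "2 * int ((N - t choose 2) + (t + 2 choose 2)) =
      int N * (int N - 4 * int t - 1) + 2 * int (N * t) + 2 * (int t + 1)\<^sup>2"
    using \<open>4 * t + 1 \<le> N\<close>
    by (simp add: two_mult_choose_two_int of_nat_diff algebra_simps power2_eq_square)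
  ultimately have "2 * int (N * t) < 2 * int ((N - t choose 2) + (t + 2 choose 2))"
    by linarith
  then show ?thesis
    by (simp only: mult_less_cancel_left_pos[of 2] of_nat_less_iff)
qed

lemma not_feasible_line_gap:
  assumes "1 \<le> t" "t * t + 5 * t + 2 < 2 * N"
    and "(N - t choose 2) + (t + 2 choose 2) \<le> M" "M < (N - t + 1 choose 2)"
  shows "\<not> feasible_line N M"
proof
  assume "feasible_line N M"
  then obtain E where E: "simple_edge_set E" "card E = N" "card (line_graph_edges E) = M"
    unfolding feasible_line_def by blast
  then obtain v where max: "\<And>x. degree E x \<le> degree E v"
    using ex_max_degree unfolding simple_edge_set_def by blast
  define D where "D = degree E v"
  have lower: "D choose 2 \<le> M"
    using degree_choose_two_le_card_line_graph_edges[OF E(1)] E(3) unfolding D_def by simp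
  have star: "M \<le> (D choose 2) + (N - D choose 2) + 2 * (N - D)"
    using card_line_graph_edges_le_star_bound[OF E(1)] E unfolding D_def by simp
  have max_degree: "M \<le> N * (D - 1)"
    using card_line_graph_edges_le_max_degree[OF E(1) max] E unfolding D_def by simp
  consider "N - t + 1 \<le> D" | "t + 2 \<le> D" "D \<le> N - t" | "D \<le> t + 1"
    by linarith
  then show False
  proof cases
    case 1
    then show False
      using binomial_right_mono[OF 1, of 2] lower assms(4) by linarith
  next
    case 2
    then show False
      using star_bound_less_gap_start[OF 2] star assms(3) by linarith
  next
    case 3
    then have "N * (D - 1) \<le> N * t"
      by (intro mult_le_mono2) linarith
    then show False
      using times_less_gap_start[OF assms(1,2)] max_degree assms(3) by linarith
  qed
qed

lemma real_less_quadratic_root_iff: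
  "real t < (-5 + sqrt (8 * real N + 17)) / 2 \<longleftrightarrow> t * t + 5 * t + 2 < 2 * N"
proof -
  have "real t < (-5 + sqrt (8 * real N + 17)) / 2 \<longleftrightarrow> 2 * real t + 5 < sqrt (8 * real N + 17)"
    by auto
  also have "\<dots> \<longleftrightarrow> (2 * real t + 5)\<^sup>2 < 8 * real N + 17"
    by (metis real_sqrt_less_iff real_sqrt_abs abs_of_nonneg of_nat_0_le_iff add_nonneg_nonneg
        mult_nonneg_nonneg zero_le_numeral)
  also have "\<dots> \<longleftrightarrow> real (t * t + 5 * t + 2) < real (2 * N)"
    by (simp add: power2_eq_square algebra_simps) linarith
  finally show ?thesis
    by (simp only: of_nat_less_iff)
qed

theorem theorem1:
  fixes N M :: nat
  assumes "N \<ge> 5" and "M \<le> N choose 2"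
  shows "\<not> feasible_line N M \<longleftrightarrow>
    (\<exists>t::nat. 1 \<le> t \<and> real t < (-5 + sqrt (8 * real N + 17)) / 2 \<and>
       ((N - t) choose 2) + ((t + 2) choose 2) \<le> M \<and>
       M \<le> ((N - t + 1) choose 2) - 1)"
proof -
  have upper_iff: "M \<le> (N - t + 1 choose 2) - 1 \<longleftrightarrow> M < (N - t + 1 choose 2)"
    if "t * t + 5 * t + 2 < 2 * N" for t
  proof -
    have "t < N"
      using that by linarith
    then have "0 < (N - t + 1 choose 2)"
      by simp
    then show ?thesis
      by linarith
  qed
  have "1 \<le> N"
    using assms(1) by simp
  show ?thesis
    unfolding real_less_quadratic_root_iff
    using feasible_line_or_gap[OF \<open>1 \<le> N\<close> assms(2)] not_feasible_line_gap[of _ N M] upper_iff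
    by blast
qed

end
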